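(* For every allocation $\mathcal{E}=(E_1,\dots,E_M)\in\mathfrak{E}$ let $V(\mathcal{E})$ denote the optimal value of the parametric problem $\mathcal{P}(\mathcal{E})$ described in the context. Then $V$ is convex on $\mathfrak{E}$: for all $\lambda\in[0,1]$ and all $\mathcal{E}_1,\mathcal{E}_2\in\mathfrak{E}$, $V(\lambda\mathcal{E}_1+(1-\lambda)\mathcal{E}_2)\le\lambda V(\mathcal{E}_1)+(1-\lambda)V(\mathcal{E}_2)$.
   Context: Data: integers $N\ge1$, $M\ge1$, $T>0$, $E>0$, constants $\alpha>0,\beta$, $L<U$, $x_{i0}\in[L,U]$ ($i\in[N]:=\{1,\dots,N\}$), a price $\pi:[0,T]\to\mathbb{R}$, a constant ambient temperature $\hat{x}>U$. Let $0=\tau_0<\tau_1<\dots<\tau_M=T$ be the partition of $[0,T]$ into the subintervals on which $\pi$ is monotone, $T_j:=\tau_j-\tau_{j-1}$. Let $\overline{u}:=\frac\alpha\beta(\hat{x}-U)$, $\underline{u}:=\frac\alpha\beta(\hat{x}-L)$, $t^0:=\frac1\alpha\log\frac{\hat{x}-L}{\hat{x}-U}$, $t^1:=\frac1\alpha\log\frac{U-\hat{x}+\beta/\alpha}{L-\hat{x}+\beta/\alpha}$, $\overline{E}_j:=N\overline{u}[T_j-t^0]^+$, $\underline{E}_j:=N\{\min(t^1,T_j)+\underline{u}[T_j-t^1]^+\}$, where $[s]^+=\max\{0,s\}$. The admissible allocations are $\mathfrak{E}:=\{(E_1,\dots,E_M)\in\mathbb{R}^M_+:\sum_jE_j=E,\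 E_j\in[\overline{E}_j,\underline{E}_j]\ \forall j\}$. Problem $\mathcal{P}(\mathcal{E})$: over measurable $u_i:[0,T]\to[0,1]$, minimize $J(\mathbf{u})=\int_0^T\pi(t)\sum_{i=1}^Nu_i(t)dt$ subject to $\dot{x}_i=-\alpha(x_i-\hat{x})-\beta u_i$ a.e., $x_i(0)=x_{i0}$, $L\le x_i(t)\le U$ for all $t$ ($i\in[N]$), $\dot{x}_{N+1}=\sum_iu_i$ a.e., $x_{N+1}(0)=0$, and $x_{N+1}(\tau_j)=E_1+\dots+E_j$ for $j=1,\dots,M$. $V(\mathcal{E})$ is the minimum (infimum) of $J$ over feasible controls. *)

theory Defs
  imports "HOL-Analysis.Analysis" "HOL-Library.Extended_Real"
begin

definition pos_part :: "real \<Rightarrow> real" where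
  "pos_part s = max 0 s"

definition Tlen :: "(nat \<Rightarrow> real) \<Rightarrow> nat \<Rightarrow> real" where
  "Tlen \<tau> j = \<tau> j - \<tau> (j - 1)"

definition ubar :: "real \<Rightarrow> real \<Rightarrow> real \<Rightarrow> real \<Rightarrow> real" where
  "ubar \<alpha> \<beta> xh U = \<alpha> / \<beta> * (xh - U)"

definition uund :: "real \<Rightarrow> real \<Rightarrow> real \<Rightarrow> real \<Rightarrow> real" where
  "uund \<alpha> \<beta> xh L = \<alpha> / \<beta> * (xh - L)"

definition t0 :: "real \<Rightarrow> real \<Rightarrow> real \<Rightarrow> real \<Rightarrow> real" where
  "t0 \<alpha> xh L U = 1 / \<alpha> * ln ((xh - L) / (xh - U))"

definition t1 :: "real \<Rightarrow> real \<Rightarrow> real \<Rightarrow> real \<Rightarrow> real \<Rightarrow> real" where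
  "t1 \<alpha> \<beta> xh L U = 1 / \<alpha> * ln ((U - xh + \<beta> / \<alpha>) / (L - xh + \<beta> / \<alpha>))"

definition Ebar :: "nat \<Rightarrow> real \<Rightarrow> real \<Rightarrow> real \<Rightarrow> real \<Rightarrow> real \<Rightarrow> (nat \<Rightarrow> real) \<Rightarrow> nat \<Rightarrow> real" where
  "Ebar N \<alpha> \<beta> xh L U \<tau> j =
     real N * ubar \<alpha> \<beta> xh U * pos_part (Tlen \<tau> j - t0 \<alpha> xh L U)"

definition Eund :: "nat \<Rightarrow> real \<Rightarrow> real \<Rightarrow> real \<Rightarrow> real \<Rightarrow> real \<Rightarrow> (nat \<Rightarrow> real) \<Rightarrow> nat \<Rightarrow> real" where
  "Eund N \<alpha> \<beta> xh L U \<tau> j =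
     real N * (min (t1 \<alpha> \<beta> xh L U) (Tlen \<tau> j)
               + uund \<alpha> \<beta> xh L * pos_part (Tlen \<tau> j - t1 \<alpha> \<beta> xh L U))"

text \<open>Admissible allocations (E_1,...,E_M), represented by their values at indices 1..M.\<close>
definition Adm :: "nat \<Rightarrow> nat \<Rightarrow> real \<Rightarrow> real \<Rightarrow> real \<Rightarrow> real \<Rightarrow> real \<Rightarrow> real \<Rightarrow> (nat \<Rightarrow> real)
                   \<Rightarrow> (nat \<Rightarrow> real) set" where
  "Adm N M Etot \<alpha> \<beta> xh L U \<tau> =
     {E. (\<forall>j\<in>{1..M}. 0 \<le> E j \<and> Ebar N \<alpha> \<beta> xh L U \<tau> j \<le> E j \<and> E j \<le> Eund N \<alpha> \<beta> xh L U \<tau> j)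
         \<and> (\<Sum>j=1..M. E j) = Etot}"

text \<open>The state equations are
  understood in the Caratheodory (integral) sense: x_i is continuous and
  x_i(t) = x_i0 + int_0^t (-alpha (x_i - xh) - beta u_i).  The energy state x_{N+1}
  is x_{N+1}(t) = int_0^t sum_i u_i.\<close>
definition feasible ::
  "nat \<Rightarrow> nat \<Rightarrow> real \<Rightarrow> real \<Rightarrow> real \<Rightarrow> real \<Rightarrow> real \<Rightarrow> real \<Rightarrow> (nat \<Rightarrow> real)
   \<Rightarrow> (nat \<Rightarrow> real) \<Rightarrow> (nat \<Rightarrow> real) \<Rightarrow> (nat \<Rightarrow> real \<Rightarrow> real) \<Rightarrow> bool" where
  "feasible N M T \<alpha> \<beta> xh L U x0 \<tau> E u \<longleftrightarrow>
     (\<forall>i\<in>{1..N}.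
        u i \<in> borel_measurable (lebesgue_on {0..T})
      \<and> (\<forall>t\<in>{0..T}. 0 \<le> u i t \<and> u i t \<le> 1)
      \<and> (\<exists>x :: real \<Rightarrow> real. continuous_on {0..T} x
           \<and> (\<forall>t\<in>{0..T}. x t = x0 i + integral {0..t} (\<lambda>s. - \<alpha> * (x s - xh) - \<beta> * u i s))
           \<and> (\<forall>t\<in>{0..T}. L \<le> x t \<and> x t \<le> U)))
   \<and> (\<forall>j\<in>{1..M}. integral {0..\<tau> j} (\<lambda>t. \<Sum>i=1..N. u i t) = (\<Sum>k=1..j. E k))"

definition cost :: "nat \<Rightarrow> real \<Rightarrow> (real \<Rightarrow> real) \<Rightarrow> (nat \<Rightarrow> real \<Rightarrow> real) \<Rightarrow> real" where
  "cost N T \<pi> u = integral {0..T} (\<lambda>t. \<pi> t * (\<Sum>i=1..N. u i t))"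

text \<open>Optimal value (infimum; +infinity if infeasible).\<close>
definition Vopt ::
  "nat \<Rightarrow> nat \<Rightarrow> real \<Rightarrow> real \<Rightarrow> real \<Rightarrow> real \<Rightarrow> real \<Rightarrow> real \<Rightarrow> (nat \<Rightarrow> real)
   \<Rightarrow> (real \<Rightarrow> real) \<Rightarrow> (nat \<Rightarrow> real) \<Rightarrow> (nat \<Rightarrow> real) \<Rightarrow> ereal" where
  "Vopt N M T \<alpha> \<beta> xh L U x0 \<pi> \<tau> E =
     (INF u \<in> {u. feasible N M T \<alpha> \<beta> xh L U x0 \<tau> E u}. ereal (cost N T \<pi> u))"

end

(*
  Controls enter the dynamics, the state and control bounds and the energy constraints
  affinely, so the convex combination of a control feasible for E1 (with its state
  trajectory) and one feasible for E2 is feasible for the combined allocation, and since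
  the cost is linear in the control its cost is the same combination of the two costs.
  Taking infima over both feasible sets gives the convexity of the optimal value; the only
  analytic input is that the cost integrand is integrable, because the price is piecewise
  monotone and the controls are bounded and measurable.
*)
theory Submission
  imports Defs
begin

lemma INF_ereal_add_right_real:
  fixes f :: "'a \<Rightarrow> real" and c :: ereal
  assumes "S \<noteq> {}"
  shows "(INF x\<in>S. c + ereal (f x)) = c + (INF x\<in>S. ereal (f x))"
proof (cases c)
  case (real r)
  have "mono (\<lambda>z. ereal r + z)" by (simp add: mono_def add_left_mono)
  moreover have "bij (\<lambda>z. ereal r + z)"
  proof (rule bij_betw_byWitness[of _ "\<lambda>z. z - ereal r"])
    have "ereal r + z - ereal r = z \<and> ereal r + (z - ereal r) = z" for z
      by (cases z) simp_all
    then show "\<forall>z\<in>UNIV. ereal r + z - ereal r = z" "\<forall>z\<in>UNIV. ereal r + (z - ereal r) = z"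
      by simp_all
  qed auto
  ultimately show ?thesis
    using mono_bij_Inf[of "\<lambda>z. ereal r + z" "(\<lambda>x. ereal (f x)) ` S"] real by (simp add: image_image)
next
  case MInf
  obtain x where "x \<in> S" using assms by blast
  then have "(INF x\<in>S. ereal (f x)) \<le> ereal (f x)" by (rule INF_lower)
  then have "(INF x\<in>S. ereal (f x)) \<noteq> \<infinity>" by auto
  then show ?thesis using MInf assms by simp
qed (use assms in simp)

lemma INF_ereal_cmult:
  fixes f :: "'a \<Rightarrow> real"
  assumes "c > 0"
  shows "(INF x\<in>S. ereal (c * f x)) = ereal c * (INF x\<in>S. ereal (f x))"
proof -
  have "mono (\<lambda>z. ereal c * z)" using assms by (simp add: mono_def ereal_mult_left_mono)
  moreover have "bij (\<lambda>z. ereal c * z)"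
    by (rule bij_betw_byWitness[of _ "\<lambda>z. z / ereal c"]) (use assms in \<open>auto simp: ereal_mult_divide ereal_divide_eq\<close>)
  ultimately show ?thesis
    using mono_bij_Inf[of "\<lambda>z. ereal c * z" "(\<lambda>x. ereal (f x)) ` S"] by (simp add: image_image)
qed

lemma le_convex_combination_INF:
  fixes f g :: "'a \<Rightarrow> real" and F :: ereal
  assumes "0 < a" "0 < b" and bound: "\<And>x y. x \<in> S \<Longrightarrow> y \<in> R \<Longrightarrow> F \<le> ereal (a * f x + b * g y)"
  shows "F \<le> ereal a * (INF x\<in>S. ereal (f x)) + ereal b * (INF y\<in>R. ereal (g y))"
proof (cases "S = {} \<or> R = {}")
  case True
  then show ?thesis using assms(1,2) by (auto simp: top_ereal_def)
next
  case False
  let ?I = "INF x\<in>S. ereal (a * f x)"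
  have "F \<le> ereal (b * g y) + ?I" if "y \<in> R" for y
  proof -
    have "F \<le> (INF x\<in>S. ereal (b * g y) + ereal (a * f x))"
      using bound that by (intro INF_greatest) (simp add: add.commute)
    then show ?thesis using False INF_ereal_add_right_real[of S "ereal (b * g y)"] by simp
  qed
  then have "F \<le> (INF y\<in>R. ?I + ereal (b * g y))"
    by (intro INF_greatest) (simp add: add.commute)
  also have "\<dots> = ?I + (INF y\<in>R. ereal (b * g y))"
    using False by (simp add: INF_ereal_add_right_real)
  finally show ?thesis using assms(1,2) by (simp add: INF_ereal_cmult)
qed

lemma integral_linear_combination:
  fixes f g :: "'a::euclidean_space \<Rightarrow> real"
  assumes "f integrable_on S" "g integrable_on S"
  shows "integral S (\<lambda>s. a * f s + b * g s) = a * integral S f + b * integral S g"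
  using assms by (simp add: integral_add integrable_on_mult_right)

lemma monotone_absolutely_integrable_on:
  fixes f :: "real \<Rightarrow> real"
  assumes "mono_on {a..b} f \<or> antimono_on {a..b} f"
  shows "f absolutely_integrable_on {a..b}"
proof (rule absolutely_integrable_integrable_bound)
  show "f integrable_on {a..b}"
    using assms
  proof
    assume "antimono_on {a..b} f"
    then have "mono_on {a..b} (\<lambda>t. - f t)" by (auto simp: monotone_on_def)
    then show ?thesis using integrable_neg[OF integrable_on_mono_on] by fastforce
  qed (rule integrable_on_mono_on)
  show "norm (f t) \<le> \<bar>f a\<bar> + \<bar>f b\<bar>" if "t \<in> {a..b}" for t
    using assms that by (auto simp: monotone_on_def) (smt (verit) atLeastAtMost_iff order_refl)+
qed (rule integrable_const_ivl)

lemma partition_le: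
  fixes \<tau> :: "nat \<Rightarrow> real"
  assumes "\<forall>j\<in>{1..M}. \<tau> (j - 1) \<le> \<tau> j" and "i \<le> j" and "j \<le> M"
  shows "\<tau> i \<le> \<tau> j"
  using assms(2,3)
proof (induction j)
  case (Suc j)
  then have "\<tau> j \<le> \<tau> (Suc j)" using assms(1) by force
  then show ?case using Suc by (cases "i = Suc j") auto
qed simp

lemma piecewise_monotone_absolutely_integrable_on:
  fixes f :: "real \<Rightarrow> real" and \<tau> :: "nat \<Rightarrow> real"
  assumes "\<forall>j\<in>{1..M}. \<tau> (j - 1) \<le> \<tau> j"
    and "\<forall>j\<in>{1..M}. mono_on {\<tau> (j - 1)..\<tau> j} f \<or> antimono_on {\<tau> (j - 1)..\<tau> j} f"
  shows "f absolutely_integrable_on {\<tau> 0..\<tau> M}"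
  using assms
proof (induction M)
  case 0
  have "mono_on {\<tau> 0..\<tau> 0} f" by (simp add: monotone_on_def)
  then show ?case using monotone_absolutely_integrable_on by blast
next
  case (Suc M)
  have "f absolutely_integrable_on {\<tau> 0..\<tau> M}" using Suc by simp
  moreover have "f absolutely_integrable_on {\<tau> M..\<tau> (Suc M)}"
    using Suc.prems(2) by (intro monotone_absolutely_integrable_on) force
  moreover have "\<tau> 0 \<le> \<tau> M" "\<tau> M \<le> \<tau> (Suc M)"
    using partition_le[OF Suc.prems(1)] by simp_all
  ultimately show ?case by (rule absolutely_integrable_on_combine)
qed

lemma convex_combination_bounds:
  fixes x y lam :: real
  assumes "a \<le> x \<and> x \<le> b" "a \<le> y \<and> y \<le> b" "0 \<le> lam" "lam \<le> 1"
  shows "a \<le> lam * x + (1 - lam) * y \<and> lam * x + (1 - lam) * y \<le> b"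
  using convexD[OF convex_real_interval(5), of x a b y lam "1 - lam"] assms by simp

lemma state_equation_convex_combination:
  fixes x1 x2 u1 u2 :: "real \<Rightarrow> real"
  assumes "continuous_on {0..T} x1" "continuous_on {0..T} x2"
    and "u1 integrable_on {0..T}" "u2 integrable_on {0..T}"
    and "\<forall>t\<in>{0..T}. x1 t = c + integral {0..t} (\<lambda>s. - \<alpha> * (x1 s - xh) - \<beta> * u1 s)"
    and "\<forall>t\<in>{0..T}. x2 t = c + integral {0..t} (\<lambda>s. - \<alpha> * (x2 s - xh) - \<beta> * u2 s)"
    and "t \<in> {0..T}"
  shows "lam * x1 t + (1 - lam) * x2 t = c + integral {0..t}
           (\<lambda>s. - \<alpha> * ((lam * x1 s + (1 - lam) * x2 s) - xh) - \<beta> * (lam * u1 s + (1 - lam) * u2 s))"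
proof -
  have sub: "{0..t} \<subseteq> {0..T}" using assms(7) by auto
  have "(\<lambda>s. - \<alpha> * (x s - xh) - \<beta> * u s) integrable_on {0..t}"
    if "continuous_on {0..T} x" "u integrable_on {0..T}" for x u
    by (intro integrable_diff integrable_on_mult_right integrable_on_subinterval[OF that(2) sub]
        integrable_continuous_interval continuous_on_subset[OF that(1) sub] integrable_const_ivl)
  then have "integral {0..t} (\<lambda>s. lam * (- \<alpha> * (x1 s - xh) - \<beta> * u1 s) + (1 - lam) * (- \<alpha> * (x2 s - xh) - \<beta> * u2 s))
      = lam * (x1 t - c) + (1 - lam) * (x2 t - c)"
    using assms by (simp add: integral_linear_combination)
  then show ?thesis by (simp add: algebra_simps)
qed

lemma feasible_controlD:
  assumes "feasible N M T \<alpha> \<beta> xh L U x0 \<tau> E u" and "i \<in> {1..N}"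
  shows "u i \<in> borel_measurable (lebesgue_on {0..T})" and "\<forall>t\<in>{0..T}. 0 \<le> u i t \<and> u i t \<le> 1"
  using assms unfolding feasible_def by blast+

lemma feasible_stateE:
  assumes "feasible N M T \<alpha> \<beta> xh L U x0 \<tau> E u" and "i \<in> {1..N}"
  obtains x where "continuous_on {0..T} x"
    and "\<forall>t\<in>{0..T}. x t = x0 i + integral {0..t} (\<lambda>s. - \<alpha> * (x s - xh) - \<beta> * u i s)"
    and "\<forall>t\<in>{0..T}. L \<le> x t \<and> x t \<le> U"
  using assms unfolding feasible_def by blast

lemma feasible_energyD:
  assumes "feasible N M T \<alpha> \<beta> xh L U x0 \<tau> E u" and "j \<in> {1..M}"
  shows "integral {0..\<tau> j} (\<lambda>t. \<Sum>i=1..N. u i t) = (\<Sum>k=1..j. E k)"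
  using assms unfolding feasible_def by blast

lemma feasible_control_integrable:
  assumes "feasible N M T \<alpha> \<beta> xh L U x0 \<tau> E u" and "i \<in> {1..N}"
  shows "u i integrable_on {0..T}"
proof (rule measurable_bounded_by_integrable_imp_integrable[where g="\<lambda>_. 1"])
  show "norm (u i t) \<le> 1" if "t \<in> {0..T}" for t
    using feasible_controlD(2)[OF assms] that by auto
qed (simp_all add: feasible_controlD(1)[OF assms] integrable_const_ivl)

lemma feasible_cost_integrable:
  assumes "feasible N M T \<alpha> \<beta> xh L U x0 \<tau> E u" and "\<pi> absolutely_integrable_on {0..T}"
  shows "(\<lambda>t. \<pi> t * (\<Sum>i=1..N. u i t)) integrable_on {0..T}"
proof -
  note u = feasible_controlD[OF assms(1)]
  have "(\<lambda>t. \<Sum>i=1..N. u i t) \<in> borel_measurable (lebesgue_on {0..T})"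
    using u by (intro borel_measurable_sum) auto
  moreover have "(\<Sum>i=1..N. u i t) \<in> {0..real N}" if "t \<in> {0..T}" for t
    using u that sum_bounded_above[of "{1..N}" "\<lambda>i. u i t" 1] sum_nonneg[of "{1..N}" "\<lambda>i. u i t"]
    by auto
  then have "bounded ((\<lambda>t. \<Sum>i=1..N. u i t) ` {0..T})"
    by (intro bounded_subset[OF bounded_closed_interval]) blast
  ultimately have "(\<lambda>t. (\<Sum>i=1..N. u i t) * \<pi> t) absolutely_integrable_on {0..T}"
    using assms(2) by (intro absolutely_integrable_bounded_measurable_product_real) auto
  then show ?thesis by (simp add: absolutely_integrable_on_def mult.commute)
qed

lemma feasible_energy_convex_combination:
  assumes "\<forall>j\<in>{1..M}. \<tau> j \<le> T"
    and feasible1: "feasible N M T \<alpha> \<beta> xh L U x0 \<tau> E1 u1"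
    and feasible2: "feasible N M T \<alpha> \<beta> xh L U x0 \<tau> E2 u2"
    and j: "j \<in> {1..M}"
  shows "integral {0..\<tau> j} (\<lambda>t. \<Sum>i=1..N. lam * u1 i t + (1 - lam) * u2 i t)
      = (\<Sum>k=1..j. lam * E1 k + (1 - lam) * E2 k)"
proof -
  have integrable: "(\<lambda>t. \<Sum>i=1..N. u i t) integrable_on {0..\<tau> j}"
    if "feasible N M T \<alpha> \<beta> xh L U x0 \<tau> E u" for E u
  proof (rule integrable_on_subinterval)
    show "(\<lambda>t. \<Sum>i=1..N. u i t) integrable_on {0..T}"
      using feasible_control_integrable[OF that] by (intro integrable_sum) auto
    show "{0..\<tau> j} \<subseteq> {0..T}" using assms(1) j by auto
  qed
  have "integral {0..\<tau> j} (\<lambda>t. \<Sum>i=1..N. lam * u1 i t + (1 - lam) * u2 i t)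
      = integral {0..\<tau> j} (\<lambda>t. lam * (\<Sum>i=1..N. u1 i t) + (1 - lam) * (\<Sum>i=1..N. u2 i t))"
    by (simp add: sum.distrib sum_distrib_left)
  also have "\<dots> = lam * (\<Sum>k=1..j. E1 k) + (1 - lam) * (\<Sum>k=1..j. E2 k)"
    using integral_linear_combination[OF integrable[OF feasible1] integrable[OF feasible2]]
      feasible_energyD[OF feasible1 j] feasible_energyD[OF feasible2 j] by simp
  finally show ?thesis by (simp add: sum.distrib sum_distrib_left)
qed

lemma feasible_convex_combination:
  assumes "\<forall>j\<in>{1..M}. \<tau> j \<le> T" and lam: "0 \<le> lam" "lam \<le> 1"
    and feasible1: "feasible N M T \<alpha> \<beta> xh L U x0 \<tau> E1 u1"
    and feasible2: "feasible N M T \<alpha> \<beta> xh L U x0 \<tau> E2 u2"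
  shows "feasible N M T \<alpha> \<beta> xh L U x0 \<tau> (\<lambda>j. lam * E1 j + (1 - lam) * E2 j)
           (\<lambda>i t. lam * u1 i t + (1 - lam) * u2 i t)"
  unfolding feasible_def
proof (intro conjI ballI)
  fix i assume i: "i \<in> {1..N}"
  note u1 = feasible_controlD[OF feasible1 i] and u2 = feasible_controlD[OF feasible2 i]
  obtain x1 where x1: "continuous_on {0..T} x1"
      "\<forall>t\<in>{0..T}. x1 t = x0 i + integral {0..t} (\<lambda>s. - \<alpha> * (x1 s - xh) - \<beta> * u1 i s)"
      "\<forall>t\<in>{0..T}. L \<le> x1 t \<and> x1 t \<le> U"
    using feasible_stateE[OF feasible1 i] .
  obtain x2 where x2: "continuous_on {0..T} x2"
      "\<forall>t\<in>{0..T}. x2 t = x0 i + integral {0..t} (\<lambda>s. - \<alpha> * (x2 s - xh) - \<beta> * u2 i s)"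
      "\<forall>t\<in>{0..T}. L \<le> x2 t \<and> x2 t \<le> U"
    using feasible_stateE[OF feasible2 i] .
  show "(\<lambda>t. lam * u1 i t + (1 - lam) * u2 i t) \<in> borel_measurable (lebesgue_on {0..T})"
    using u1(1) u2(1) by measurable
  show "0 \<le> lam * u1 i t + (1 - lam) * u2 i t" "lam * u1 i t + (1 - lam) * u2 i t \<le> 1"
    if "t \<in> {0..T}" for t
    using convex_combination_bounds[of 0 "u1 i t" 1 "u2 i t" lam] u1(2) u2(2) lam that by auto
  let ?x = "\<lambda>t. lam * x1 t + (1 - lam) * x2 t"
  have "continuous_on {0..T} ?x" using x1(1) x2(1) by (intro continuous_intros)
  moreover have "?x t = x0 i + integral {0..t}
      (\<lambda>s. - \<alpha> * (?x s - xh) - \<beta> * (lam * u1 i s + (1 - lam) * u2 i s))" if "t \<in> {0..T}" for t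
    using state_equation_convex_combination[OF x1(1) x2(1) feasible_control_integrable[OF feasible1 i]
        feasible_control_integrable[OF feasible2 i] x1(2) x2(2) that] .
  moreover have "\<forall>t\<in>{0..T}. L \<le> ?x t \<and> ?x t \<le> U"
    using x1(3) x2(3) lam by (intro ballI convex_combination_bounds) auto
  ultimately show "\<exists>x. continuous_on {0..T} x
      \<and> (\<forall>t\<in>{0..T}. x t = x0 i + integral {0..t}
           (\<lambda>s. - \<alpha> * (x s - xh) - \<beta> * (lam * u1 i s + (1 - lam) * u2 i s)))
      \<and> (\<forall>t\<in>{0..T}. L \<le> x t \<and> x t \<le> U)"
    by blast
next
  fix j assume "j \<in> {1..M}"
  then show "integral {0..\<tau> j} (\<lambda>t. \<Sum>i=1..N. lam * u1 i t + (1 - lam) * u2 i t)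
      = (\<Sum>k=1..j. lam * E1 k + (1 - lam) * E2 k)"
    using feasible_energy_convex_combination[OF assms(1) feasible1 feasible2] by blast
qed

lemma cost_convex_combination:
  assumes "(\<lambda>t. \<pi> t * (\<Sum>i=1..N. u1 i t)) integrable_on {0..T}"
    and "(\<lambda>t. \<pi> t * (\<Sum>i=1..N. u2 i t)) integrable_on {0..T}"
  shows "cost N T \<pi> (\<lambda>i t. lam * u1 i t + (1 - lam) * u2 i t)
           = lam * cost N T \<pi> u1 + (1 - lam) * cost N T \<pi> u2"
proof -
  have "(\<lambda>t. \<pi> t * (\<Sum>i=1..N. lam * u1 i t + (1 - lam) * u2 i t))
      = (\<lambda>t. lam * (\<pi> t * (\<Sum>i=1..N. u1 i t)) + (1 - lam) * (\<pi> t * (\<Sum>i=1..N. u2 i t)))"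
    by (simp add: sum.distrib flip: sum_distrib_left) (simp add: algebra_simps)
  then show ?thesis
    unfolding cost_def using assms by (simp add: integral_linear_combination)
qed

lemma Vopt_convex_combination:
  assumes horizon: "\<forall>j\<in>{1..M}. \<tau> j \<le> T" and price: "\<pi> absolutely_integrable_on {0..T}"
    and lam: "0 < lam" "lam < 1"
  shows "Vopt N M T \<alpha> \<beta> xh L U x0 \<pi> \<tau> (\<lambda>j. lam * E1 j + (1 - lam) * E2 j)
         \<le> ereal lam * Vopt N M T \<alpha> \<beta> xh L U x0 \<pi> \<tau> E1
           + ereal (1 - lam) * Vopt N M T \<alpha> \<beta> xh L U x0 \<pi> \<tau> E2"
  unfolding Vopt_def
proof (rule le_convex_combination_INF)
  fix u1 u2
  assume "u1 \<in> Collect (feasible N M T \<alpha> \<beta> xh L U x0 \<tau> E1)"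
    and "u2 \<in> Collect (feasible N M T \<alpha> \<beta> xh L U x0 \<tau> E2)"
  then have feasible1: "feasible N M T \<alpha> \<beta> xh L U x0 \<tau> E1 u1"
    and feasible2: "feasible N M T \<alpha> \<beta> xh L U x0 \<tau> E2 u2" by simp_all
  let ?E = "\<lambda>j. lam * E1 j + (1 - lam) * E2 j" and ?u = "\<lambda>i t. lam * u1 i t + (1 - lam) * u2 i t"
  have "?u \<in> Collect (feasible N M T \<alpha> \<beta> xh L U x0 \<tau> ?E)"
    using feasible_convex_combination[OF horizon _ _ feasible1 feasible2] lam by simp
  then have "(INF u\<in>Collect (feasible N M T \<alpha> \<beta> xh L U x0 \<tau> ?E). ereal (cost N T \<pi> u))
      \<le> ereal (cost N T \<pi> ?u)"
    by (rule INF_lower)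
  also have "cost N T \<pi> ?u = lam * cost N T \<pi> u1 + (1 - lam) * cost N T \<pi> u2"
    using cost_convex_combination feasible_cost_integrable[OF feasible1 price]
      feasible_cost_integrable[OF feasible2 price] by blast
  finally show "(INF u\<in>Collect (feasible N M T \<alpha> \<beta> xh L U x0 \<tau> ?E). ereal (cost N T \<pi> u))
      \<le> ereal (lam * cost N T \<pi> u1 + (1 - lam) * cost N T \<pi> u2)" .
qed (use lam in simp_all)

theorem proposition3:
  fixes N M :: nat and T Etot \<alpha> \<beta> L U xh :: real
    and x0 :: "nat \<Rightarrow> real" and \<pi> :: "real \<Rightarrow> real" and \<tau> :: "nat \<Rightarrow> real" and lam :: real and E1 E2 :: "nat \<Rightarrow> real"
  assumes "N \<ge> 1" and "M \<ge> 1" and "T > 0" and "Etot > 0" and "\<alpha> > 0" and "L < U"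
    and "\<forall>i\<in>{1..N}. L \<le> x0 i \<and> x0 i \<le> U"
    and "xh > U"
    and "\<tau> 0 = 0" and "\<tau> M = T" and "\<forall>j\<in>{1..M}. \<tau> (j - 1) < \<tau> j"
    and "\<forall>j\<in>{1..M}. mono_on {\<tau> (j - 1)..\<tau> j} \<pi> \<or> antimono_on {\<tau> (j - 1)..\<tau> j} \<pi>"
    and "0 \<le> lam" and "lam \<le> 1"
    and "E1 \<in> Adm N M Etot \<alpha> \<beta> xh L U \<tau>" and "E2 \<in> Adm N M Etot \<alpha> \<beta> xh L U \<tau>"
  shows "Vopt N M T \<alpha> \<beta> xh L U x0 \<pi> \<tau> (\<lambda>j. lam * E1 j + (1 - lam) * E2 j)
         \<le> ereal lam * Vopt N M T \<alpha> \<beta> xh L U x0 \<pi> \<tau> E1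
           + ereal (1 - lam) * Vopt N M T \<alpha> \<beta> xh L U x0 \<pi> \<tau> E2"
proof -
  have partition: "\<forall>j\<in>{1..M}. \<tau> (j - 1) \<le> \<tau> j" using assms(11) by (simp add: less_imp_le)
  have horizon: "\<forall>j\<in>{1..M}. \<tau> j \<le> T" using partition_le[OF partition] assms(10) by auto
  have price: "\<pi> absolutely_integrable_on {0..T}"
    using piecewise_monotone_absolutely_integrable_on[OF partition assms(12)] assms(9,10) by simp
  \<comment> \<open>The endpoints are separate cases because \<open>ereal 0 * \<infinity> = 0\<close>.\<close>
  consider "lam = 0" | "lam = 1" | "0 < lam" "lam < 1" using assms(13,14) by linarith
  then show ?thesis
  proof cases
    case 1
    then have "(\<lambda>j. lam * E1 j + (1 - lam) * E2 j) = E2" by simp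
    then show ?thesis using 1 by (simp add: zero_ereal_def[symmetric])
  next
    case 2
    then have "(\<lambda>j. lam * E1 j + (1 - lam) * E2 j) = E1" by simp
    then show ?thesis using 2 by (simp add: zero_ereal_def[symmetric] one_ereal_def[symmetric])
  next
    case 3
    then show ?thesis using Vopt_convex_combination[OF horizon price] by blast
  qed
qed

end
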